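(* Let $G$ be a network with three sources and three terminals containing no vertex of type $(3,3)$, $(2,3)$ or $(3,2)$. If $v$ is a vertex of type $(2,2)$, then for each terminal $t_j$ in the terminal color of $v$ there exists a directed path $P$ from a source to $t_j$ whose leaf of $t_j$ is a vertex of type $(2,2)$ with color equal to $\mathrm{col}(v)$. (E.g., if $\mathrm{col}(v)=(s_1,s_2,t_1,t_2)$, then both $t_1$ and $t_2$ have leaves of color $(s_1,s_2,t_1,t_2)$.)
   Context: A network is a finite directed acyclic graph $G=(V,E)$ with three sources $s_1,s_2,s_3$ (no incoming edges) and three terminals $t_1,t_2,t_3$ (no outgoing edges). For $v\in V$, $c_s(v)$ is the number of sources with a directed path to $v$ and $c_t(v)$ the number of terminals reachable from $v$ by a directed path (a vertex reaches itself, so e.g. each terminal has $c_t=1$); $(c_s(v),c_t(v))$ is the type of $v$. For a vertex $v$ of type $(2,2)$, its color $\mathrm{col}(v)$ is the tuple $(s_a,s_b,t_c,t_d)$ consisting of the two sources reaching $v$ and the two terminals reachable from $v$; $(s_a,s_b)$ is its source color and $(t_c,t_d)$ its terminal color. For a directed path $P$ from a source to a terminal $t_j$, the leaf of $t_j$ corresponding to $P$ is the last vertex $v_P$ on $P$ with $c_t(v_P)\ge 2$ (so every later vertex of $P$ has $c_t=1$); the leaves of $t_j$ are all such vertices. *)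

theory Defs
  imports Main
begin

definition network :: "'a set \<Rightarrow> ('a \<times> 'a) set \<Rightarrow> 'a set \<Rightarrow> 'a set \<Rightarrow> bool" where
  "network V E S T \<longleftrightarrow> finite V \<and> E \<subseteq> V \<times> V \<and> acyclic E \<and>
     S \<subseteq> V \<and> T \<subseteq> V \<and> card S = 3 \<and> card T = 3 \<and> S \<inter> T = {} \<and>
     (\<forall>s\<in>S. \<forall>u. (u, s) \<notin> E) \<and> (\<forall>t\<in>T. \<forall>w. (t, w) \<notin> E)"

definition src_col :: "('a \<times> 'a) set \<Rightarrow> 'a set \<Rightarrow> 'a \<Rightarrow> 'a set" where
  "src_col E S v = {s \<in> S. (s, v) \<in> E\<^sup>*}"

definition trm_col :: "('a \<times> 'a) set \<Rightarrow> 'a set \<Rightarrow> 'a \<Rightarrow> 'a set" where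
  "trm_col E T v = {t \<in> T. (v, t) \<in> E\<^sup>*}"

definition c_s :: "('a \<times> 'a) set \<Rightarrow> 'a set \<Rightarrow> 'a \<Rightarrow> nat" where
  "c_s E S v = card (src_col E S v)"

definition c_t :: "('a \<times> 'a) set \<Rightarrow> 'a set \<Rightarrow> 'a \<Rightarrow> nat" where
  "c_t E T v = card (trm_col E T v)"

definition dpath :: "('a \<times> 'a) set \<Rightarrow> 'a list \<Rightarrow> bool" where
  "dpath E P \<longleftrightarrow> P \<noteq> [] \<and> (\<forall>i. Suc i < length P \<longrightarrow> (P ! i, P ! Suc i) \<in> E)"

definition is_leaf_of_path :: "('a \<times> 'a) set \<Rightarrow> 'a set \<Rightarrow> 'a list \<Rightarrow> 'a \<Rightarrow> bool" where
  "is_leaf_of_path E T P x \<longleftrightarrow> (\<exists>k < length P. P ! k = x \<and> c_t E T x \<ge> 2 \<and>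
      (\<forall>j. k < j \<and> j < length P \<longrightarrow> c_t E T (P ! j) < 2))"

end

theory Submission
  imports Defs
begin

(* Pick a source s reaching v and concatenate walks s ~> v ~> t_j into one directed
   path P.  Since c_t(v) = 2, some vertex of P at or after v has c_t >= 2, so the
   leaf x of t_j on P lies at or after v, i.e. x is reachable from v.  Colors are
   monotone along reachability: trm_col x is contained in trm_col v and src_col v in
   src_col x.  The first inclusion together with c_t(x) >= 2 = c_t(v) forces equal
   terminal colors; for the second, c_s(x) is 2 or 3, and 3 is excluded because no
   vertex has type (3,2). *)

lemma dpath_snoc:
  assumes "dpath E P" "(last P, z) \<in> E"
  shows "dpath E (P @ [z])"
  unfolding dpath_def
proof (intro conjI allI impI)
  show "P @ [z] \<noteq> []" by simp
  fix i assume i: "Suc i < length (P @ [z])"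
  show "((P @ [z]) ! i, (P @ [z]) ! Suc i) \<in> E"
  proof (cases "Suc i < length P")
    case True
    then show ?thesis using assms(1) by (simp add: nth_append dpath_def)
  next
    case False
    then have "i = length P - 1" using i by simp
    moreover have "P \<noteq> []" using assms(1) by (simp add: dpath_def)
    ultimately show ?thesis using assms(2) False
      by (simp add: nth_append last_conv_nth)
  qed
qed

lemma dpath_extend:
  assumes "(v, t) \<in> E\<^sup>*"
  shows "dpath E P \<Longrightarrow> last P = v \<Longrightarrow> \<exists>Q. dpath E Q \<and> hd Q = hd P \<and> last Q = t \<and>
     length P \<le> length Q \<and> take (length P) Q = P"
  using assms
proof (induction rule: rtrancl_induct)
  case base
  then show ?case by auto
next
  case (step y z)
  then obtain Q where Q: "dpath E Q" "hd Q = hd P" "last Q = y" "length P \<le> length Q"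
    "take (length P) Q = P" by blast
  have "Q \<noteq> []" using Q(1) by (simp add: dpath_def)
  then show ?case using Q step dpath_snoc[of E Q z]
    by (intro exI[of _ "Q @ [z]"]) auto
qed

lemma dpath_through:
  assumes sv: "(s, v) \<in> E\<^sup>*" and vt: "(v, t) \<in> E\<^sup>*"
  obtains P i where "dpath E P" "hd P = s" "last P = t" "i < length P" "P ! i = v"
proof -
  have "dpath E [s]" by (simp add: dpath_def)
  from dpath_extend[OF sv this] obtain P1
    where P1: "dpath E P1" "hd P1 = s" "last P1 = v" by auto
  from dpath_extend[OF vt P1(1) P1(3)] obtain P
    where P: "dpath E P" "hd P = s" "last P = t" "length P1 \<le> length P"
      "take (length P1) P = P1"
    using P1 by auto
  have P1ne: "P1 \<noteq> []" using P1(1) by (simp add: dpath_def)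
  define i where "i = length P1 - 1"
  have "i < length P" using P1ne P(4) by (cases P1) (auto simp: i_def)
  moreover have "P ! i = v"
  proof -
    have "P ! i = take (length P1) P ! i" using P1ne by (simp add: i_def)
    also have "\<dots> = last P1" using P(5) P1ne by (simp add: i_def last_conv_nth)
    finally show ?thesis using P1(3) by simp
  qed
  ultimately show ?thesis using that P(1-3) by blast
qed

lemma dpath_reach:
  assumes "dpath E P"
  shows "i \<le> j \<Longrightarrow> j < length P \<Longrightarrow> (P ! i, P ! j) \<in> E\<^sup>*"
proof (induction j)
  case 0
  then show ?case by simp
next
  case (Suc j)
  show ?case
  proof (cases "i = Suc j")
    case True
    then show ?thesis by simp
  next
    case False
    then have "(P ! i, P ! j) \<in> E\<^sup>*" using Suc by simp
    moreover have "(P ! j, P ! Suc j) \<in> E" using assms Suc.prems by (simp add: dpath_def)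
    ultimately show ?thesis by simp
  qed
qed

lemma leaf_after:
  assumes "i < length P" "c_t E T (P ! i) \<ge> 2"
  shows "\<exists>k. i \<le> k \<and> k < length P \<and> is_leaf_of_path E T P (P ! k)"
proof -
  define K where "K = {k. k < length P \<and> c_t E T (P ! k) \<ge> 2}"
  have finK: "finite K" by (simp add: K_def)
  have iK: "i \<in> K" using assms by (simp add: K_def)
  define k where "k = Max K"
  have "k \<in> K" using finK iK unfolding k_def by (intro Max_in) auto
  then have k: "k < length P" "c_t E T (P ! k) \<ge> 2" by (auto simp: K_def)
  have "i \<le> k" using finK iK by (simp add: k_def)
  moreover have "\<forall>j. k < j \<and> j < length P \<longrightarrow> c_t E T (P ! j) < 2"
  proof (intro allI impI)
    fix j assume j: "k < j \<and> j < length P"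
    then have "j \<notin> K" using finK by (metis Max_ge k_def not_less)
    then show "c_t E T (P ! j) < 2" using j by (simp add: K_def)
  qed
  ultimately show ?thesis using k unfolding is_leaf_of_path_def by blast
qed

lemma trm_col_mono:
  assumes "(u, w) \<in> E\<^sup>*"
  shows "trm_col E T w \<subseteq> trm_col E T u"
  using assms by (auto simp: trm_col_def intro: rtrancl_trans)

lemma src_col_mono:
  assumes "(u, w) \<in> E\<^sup>*"
  shows "src_col E S u \<subseteq> src_col E S w"
  using assms by (auto simp: src_col_def intro: rtrancl_trans)

lemma trm_col_eq_downstream:
  assumes "finite T" "(v, x) \<in> E\<^sup>*" "c_t E T v \<le> c_t E T x"
  shows "trm_col E T x = trm_col E T v"
proof (rule card_seteq)
  show "finite (trm_col E T v)" using assms(1) by (simp add: trm_col_def)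
  show "trm_col E T x \<subseteq> trm_col E T v" using trm_col_mono[OF assms(2)] .
  show "card (trm_col E T v) \<le> card (trm_col E T x)" using assms(3) by (simp add: c_t_def)
qed

lemma src_col_eq_downstream:
  assumes "finite S" "card S = c_s E S v + 1" "(v, x) \<in> E\<^sup>*" "c_s E S x \<noteq> card S"
  shows "src_col E S x = src_col E S v"
proof -
  have sub: "src_col E S v \<subseteq> src_col E S x" using src_col_mono[OF assms(3)] .
  have finx: "finite (src_col E S x)" using assms(1) by (simp add: src_col_def)
  have "c_s E S x \<le> card S"
    using card_mono[OF assms(1)] by (simp add: c_s_def src_col_def)
  moreover have "c_s E S v \<le> c_s E S x" using card_mono[OF finx sub] by (simp add: c_s_def)
  ultimately have "c_s E S x = c_s E S v" using assms(2,4) by linarith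
  then show ?thesis using card_subset_eq[OF finx sub] by (simp add: c_s_def)
qed

theorem mainTheorem9:
  fixes V :: "'a set" and E :: "('a \<times> 'a) set" and S T :: "'a set" and v :: 'a
  assumes net: "network V E S T"
    and no33: "\<forall>u\<in>V. \<not> (c_s E S u = 3 \<and> c_t E T u = 3)"
    and no23: "\<forall>u\<in>V. \<not> (c_s E S u = 2 \<and> c_t E T u = 3)"
    and no32: "\<forall>u\<in>V. \<not> (c_s E S u = 3 \<and> c_t E T u = 2)"
    and vV: "v \<in> V"
    and v22: "c_s E S v = 2" "c_t E T v = 2"
  shows "\<forall>tj \<in> trm_col E T v. \<exists>P x. dpath E P \<and> hd P \<in> S \<and> last P = tj \<and>
           is_leaf_of_path E T P x \<and> c_s E S x = 2 \<and> c_t E T x = 2 \<and>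
           src_col E S x = src_col E S v \<and> trm_col E T x = trm_col E T v"
proof
  fix tj assume "tj \<in> trm_col E T v"
  then have vt: "(v, tj) \<in> E\<^sup>*" by (simp add: trm_col_def)
  have finS: "finite S" and finT: "finite T" and cS: "card S = 3" and EV: "E \<subseteq> V \<times> V"
    using net unfolding network_def by (auto intro: card_ge_0_finite)
  have "src_col E S v \<noteq> {}" using v22(1) by (auto simp: c_s_def)
  then obtain s where s: "s \<in> S" "(s, v) \<in> E\<^sup>*" by (auto simp: src_col_def)
  obtain P i where P: "dpath E P" "hd P = s" "last P = tj" "i < length P" "P ! i = v"
    using dpath_through[OF s(2) vt] .
  obtain k where k: "i \<le> k" "k < length P" and leaf: "is_leaf_of_path E T P (P ! k)"
    using leaf_after[of i P E T] P(4,5) v22(2) by auto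
  define x where "x = P ! k"
  have vx: "(v, x) \<in> E\<^sup>*" using dpath_reach[OF P(1) k] P(5) by (simp add: x_def)
  have xV: "x \<in> V" using vx vV EV by (auto elim: rtranclE)
  have "c_t E T x \<ge> 2" using leaf unfolding is_leaf_of_path_def x_def by blast
  then have teq: "trm_col E T x = trm_col E T v"
    using trm_col_eq_downstream[OF finT vx] v22(2) by simp
  then have ct2: "c_t E T x = 2" using v22(2) by (simp add: c_t_def)
  have "c_s E S x \<noteq> 3" using no32 xV ct2 by blast
  then have seq: "src_col E S x = src_col E S v"
    using src_col_eq_downstream[OF finS _ vx] cS v22(1) by simp
  then have cs2: "c_s E S x = 2" using v22(1) by (simp add: c_s_def)
  show "\<exists>P x. dpath E P \<and> hd P \<in> S \<and> last P = tj \<and>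
           is_leaf_of_path E T P x \<and> c_s E S x = 2 \<and> c_t E T x = 2 \<and>
           src_col E S x = src_col E S v \<and> trm_col E T x = trm_col E T v"
    using P s leaf cs2 ct2 seq teq unfolding x_def by blast
qed

end
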